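(* Let $G$ be a factor graph with known factors $\boldsymbol F=\{f_1,\dots,f_m\}$ and unknown factors $\boldsymbol F'=\{f'_1,\dots,f'_z\}$, and suppose that for every unknown factor $f_i\in\boldsymbol F'$ there is at least one known factor $f_j\in\boldsymbol F$ that is possibly identical to $f_i$ (i.e. $f_i\approx f_j$). Then the LIFG algorithm is able to replace all unknown potentials in $G$ by known potentials, i.e. (for a suitable choice of the threshold $\theta\in[0,1]$) every unknown factor is assigned the colour and the potential mappings of at least one known factor.
   Context: A factor graph (FG) $G=(\boldsymbol V,\boldsymbol E)$ is an undirected bipartite graph with node set $\boldsymbol V=\boldsymbol R\cup\boldsymbol F$, where $\boldsymbol R$ is a set of random variables (each $R$ with a finite range $\mathrm{range}(R)$) and $\boldsymbol F$ a set of factors; each factor $f_j$ defines a function $\phi_j(\mathcal R_j)$ mapping assignments of a sequence $\mathcal R_j$ of random variables to positive reals (potentials), and $R$ is adjacent to $f_j$ iff $R$ occurs in $\mathcal R_j$. A factor is \emph{unknown} if its argument list is known but its potential values are unknown; otherwise it is known. Evidence is a set of observed events $R=r$. $\mathrm{Ne}_G(v)$ denotes the set of neighbours of node $v$. The 2-step neighbourhood of a factor $f$ is $\mathrm{Ne}^2_G(f)=\{R\mid R\in\mathrm{Ne}_G(f)\}\cup\{f'\mid\exists R: R\in\mathrm{Ne}_G(f)\wedge f'\in\mathrm{Ne}_G(R)\}$, and $G[V']$ is the induced subgraph. For factors $f_i,f_j$, $G[\mathrm{Ne}^2_G(f_i)]$ and $G[\mathrm{Ne}^2_G(f_j)]$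 are \emph{indistinguishable} if $|\mathrm{Ne}_G(f_i)|=|\mathrm{Ne}_G(f_j)|$ and there is a bijection $\tau:\mathrm{Ne}_G(f_i)\to\mathrm{Ne}_G(f_j)$ such that for each $R_k$, $R_k$ and $\tau(R_k)$ have identical observed evidence, identical ranges, and $|\mathrm{Ne}_G(R_k)|=|\mathrm{Ne}_G(\tau(R_k))|$. Factors $f_i,f_j$ are \emph{possibly identical}, $f_i\approx f_j$, if their induced 2-step neighbourhoods are indistinguishable and at least one of them is unknown or both encode identical potential mappings. LIFG algorithm (input: FG $G$ with known factors $\boldsymbol F$, unknown factors $\boldsymbol F'$, evidence, threshold $\theta\in[0,1]$): (1) colour each known factor by its potentials; (2) give each unknown factor a unique colour; (3) for each unknown $f_i$, set $C_{f_i}=\emptyset$ and for every factor $f_j\ne f_i$ with $f_i\approx f_j$: if $f_j$ is unknown, give $f_j$ the colour of $f_i$, otherwise add $f_j$ to $C_{f_i}$; (4) for each $C_{f_i}$, let $C^{\ell}_{f_i}$ be a maximal subset of $C_{f_i}$ whose elements are pairwise possibly identical; if $|C^{\ell}_{f_i}|/|C_{f_i}|\ge\theta$, give all $f_j\in C^{\ell}_{f_i}$ the colour of $f_i$ and assign to $f_i$ the potentials of the factors in $C^{\ell}_{f_i}$; (5) run the Advanced Colour Passing (colour-passing lifting) algorithm on the resulting graph and evidence to obtain the lifted representation. *)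

theory Defs
  imports Complex_Main "HOL-Combinatorics.Permutations"
begin

text \<open>Random variables have type 'v, values type 'd, factors type 'f.
  args f is the argument sequence of factor f; rng R the range of variable R;
  ev R is the observed evidence for R (None = unobserved); pot f the potential
  mapping of f (meaningful for known factors only).\<close>
record ('v, 'd, 'f) fg =
  known   :: "'f set"
  unknown :: "'f set"
  args    :: "'f \<Rightarrow> 'v list"
  rng     :: "'v \<Rightarrow> 'd set"
  ev      :: "'v \<Rightarrow> 'd option"
  pot     :: "'f \<Rightarrow> 'd list \<Rightarrow> real"

definition factors :: "('v,'d,'f) fg \<Rightarrow> 'f set" where
  "factors G = known G \<union> unknown G"

definition assignments :: "('v,'d,'f) fg \<Rightarrow> 'f \<Rightarrow> 'd list set" where
  "assignments G f = {xs. length xs = length (args G f) \<and>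
                         (\<forall>k<length xs. xs ! k \<in> rng G (args G f ! k))}"

definition wf_fg :: "('v,'d,'f) fg \<Rightarrow> bool" where
  "wf_fg G \<longleftrightarrow> finite (known G) \<and> finite (unknown G) \<and> known G \<inter> unknown G = {}
     \<and> (\<forall>f\<in>factors G. \<forall>R\<in>set (args G f). finite (rng G R))
     \<and> (\<forall>f\<in>factors G. \<forall>R\<in>set (args G f). \<forall>r. ev G R = Some r \<longrightarrow> r \<in> rng G R)
     \<and> (\<forall>f\<in>known G. \<forall>xs\<in>assignments G f. pot G f xs > 0)"

definition fnbrs :: "('v,'d,'f) fg \<Rightarrow> 'f \<Rightarrow> 'v set" where
  "fnbrs G f = set (args G f)"

definition vnbrs :: "('v,'d,'f) fg \<Rightarrow> 'v \<Rightarrow> 'f set" where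
  "vnbrs G R = {f \<in> factors G. R \<in> set (args G f)}"

text \<open>Indistinguishability of the induced 2-step neighbourhoods.\<close>
definition indist :: "('v,'d,'f) fg \<Rightarrow> 'f \<Rightarrow> 'f \<Rightarrow> bool" where
  "indist G fi fj \<longleftrightarrow> card (fnbrs G fi) = card (fnbrs G fj) \<and>
     (\<exists>\<tau>. bij_betw \<tau> (fnbrs G fi) (fnbrs G fj) \<and>
        (\<forall>R\<in>fnbrs G fi. ev G (\<tau> R) = ev G R \<and> rng G (\<tau> R) = rng G R \<and>
                        card (vnbrs G (\<tau> R)) = card (vnbrs G R)))"

definition identical_pot :: "('v,'d,'f) fg \<Rightarrow> 'f \<Rightarrow> 'f \<Rightarrow> bool" where
  "identical_pot G fi fj \<longleftrightarrow> length (args G fj) = length (args G fi) \<and>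
     (\<exists>p. p permutes {..<length (args G fi)} \<and>
        (\<forall>xs. length xs = length (args G fi) \<longrightarrow>
            (xs \<in> assignments G fi \<longleftrightarrow> permute_list p xs \<in> assignments G fj) \<and>
            (xs \<in> assignments G fi \<longrightarrow> pot G fi xs = pot G fj (permute_list p xs))))"

definition poss_ident :: "('v,'d,'f) fg \<Rightarrow> 'f \<Rightarrow> 'f \<Rightarrow> bool" where
  "poss_ident G fi fj \<longleftrightarrow> indist G fi fj \<and>
     (fi \<in> unknown G \<or> fj \<in> unknown G \<or> identical_pot G fi fj)"

definition init_colouring :: "('v,'d,'f) fg \<Rightarrow> ('f \<Rightarrow> nat) \<Rightarrow> bool" where
  "init_colouring G col \<longleftrightarrow>
     (\<forall>f\<in>known G. \<forall>g\<in>known G. col f = col g \<longleftrightarrow> identical_pot G f g) \<and>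
     (\<forall>f\<in>unknown G. \<forall>g\<in>factors G. g \<noteq> f \<longrightarrow> col g \<noteq> col f)"

definition step3 :: "('v,'d,'f) fg \<Rightarrow> 'f \<Rightarrow> ('f \<Rightarrow> nat) \<Rightarrow> ('f \<Rightarrow> nat)" where
  "step3 G f col = (\<lambda>g. if g \<in> unknown G \<and> g \<noteq> f \<and> poss_ident G f g then col f else col g)"

definition cand :: "('v,'d,'f) fg \<Rightarrow> 'f \<Rightarrow> 'f set" where
  "cand G f = {g \<in> known G. g \<noteq> f \<and> poss_ident G f g}"

definition maximal_pi_subset :: "('v,'d,'f) fg \<Rightarrow> 'f set \<Rightarrow> 'f set \<Rightarrow> bool" where
  "maximal_pi_subset G C L \<longleftrightarrow> L \<subseteq> C \<and> pairwise (poss_ident G) L \<and>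
     (\<forall>L'. L \<subseteq> L' \<and> L' \<subseteq> C \<and> pairwise (poss_ident G) L' \<longrightarrow> L' = L)"

text \<open>Step (4) for one unknown factor f; L is the chosen maximal subset C^l_f and
  src f \<in> L the factor whose potentials are assigned to f.\<close>
definition step4 :: "('v,'d,'f) fg \<Rightarrow> real \<Rightarrow> ('f \<Rightarrow> 'f set) \<Rightarrow> ('f \<Rightarrow> 'f) \<Rightarrow> 'f \<Rightarrow>
    ('f \<Rightarrow> nat) \<times> ('f \<Rightarrow> 'd list \<Rightarrow> real) \<Rightarrow> ('f \<Rightarrow> nat) \<times> ('f \<Rightarrow> 'd list \<Rightarrow> real)" where
  "step4 G \<theta> L src f st =
     (if cand G f \<noteq> {} \<and> real (card (L f)) / real (card (cand G f)) \<ge> \<theta>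
      then ((\<lambda>g. if g \<in> L f then fst st f else fst st g), (snd st)(f := pot G (src f)))
      else st)"

text \<open>Possible results (final colouring, final potentials) of steps (1)-(4) of LIFG
  with threshold \<theta>, over all processing orders and all admissible choices.\<close>
definition lifg_run :: "('v,'d,'f) fg \<Rightarrow> real \<Rightarrow> ('f \<Rightarrow> nat) \<Rightarrow> ('f \<Rightarrow> 'd list \<Rightarrow> real) \<Rightarrow> bool" where
  "lifg_run G \<theta> col pot' \<longleftrightarrow>
     (\<exists>us col0 L src. distinct us \<and> set us = unknown G \<and> init_colouring G col0 \<and>
        (\<forall>f\<in>unknown G. maximal_pi_subset G (cand G f) (L f)) \<and>
        (\<forall>f\<in>unknown G. L f \<noteq> {} \<longrightarrow> src f \<in> L f) \<and>
        (col, pot') = fold (step4 G \<theta> L src) us (fold (step3 G) us col0, pot G))"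

end

theory Submission
  imports Defs
begin

text \<open>Take \<theta> = 0, so that step (4) fires for every unknown factor f: its candidate set is
  nonempty by hypothesis, hence so is the maximal subset L f, and f receives the potentials
  of some src f \<in> L f. Step (4) recolours only candidates, which are known factors, so f
  keeps the colour it had after step (3). The factor src f ends with the colour that step (3)
  left on the last processed u with src f \<in> L u. Both f and u are indistinguishable from
  src f, hence from each other, and step (3) gives all pairwise indistinguishable unknown
  factors one common colour.\<close>

lemma identical_pot_refl: "identical_pot G f f"
  unfolding identical_pot_def by (auto intro!: exI[of _ id] permutes_id)

lemma identical_pot_sym:
  fixes G :: "('v, 'd, 'f) fg"
  assumes "identical_pot G f g"
  shows "identical_pot G g f"
proof -
  obtain p where len: "length (args G g) = length (args G f)"
    and p: "p permutes {..<length (args G f)}"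
    and H: "\<forall>xs. length xs = length (args G f) \<longrightarrow>
            (xs \<in> assignments G f \<longleftrightarrow> permute_list p xs \<in> assignments G g) \<and>
            (xs \<in> assignments G f \<longrightarrow> pot G f xs = pot G g (permute_list p xs))"
    using assms unfolding identical_pot_def by blast
  have p_inv: "permute_list p (permute_list (inv p) ys) = ys"
    if "length ys = length (args G f)" for ys
    using permute_list_compose[of p ys "inv p"] permutes_inv_o(2)[OF p] p that by simp
  show ?thesis unfolding identical_pot_def
  proof (intro conjI exI[of _ "inv p"] allI impI)
    show "length (args G f) = length (args G g)" using len by simp
    show "inv p permutes {..<length (args G g)}" using permutes_inv[OF p] len by simp
    fix ys :: "'d list" assume ly: "length ys = length (args G g)"
    let ?xs = "permute_list (inv p) ys"
    have lx: "length ?xs = length (args G f)" using ly len by simp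
    have p_xs: "permute_list p ?xs = ys" using p_inv ly len by simp
    show "(ys \<in> assignments G g) = (?xs \<in> assignments G f)" using H lx p_xs by metis
    assume "ys \<in> assignments G g"
    then show "pot G g ys = pot G f ?xs" using H lx p_xs by metis
  qed
qed

lemma identical_pot_trans:
  fixes G :: "('v, 'd, 'f) fg"
  assumes "identical_pot G f g" and "identical_pot G g k"
  shows "identical_pot G f k"
proof -
  obtain p where len: "length (args G g) = length (args G f)"
    and p: "p permutes {..<length (args G f)}"
    and H: "\<forall>xs. length xs = length (args G f) \<longrightarrow>
            (xs \<in> assignments G f \<longleftrightarrow> permute_list p xs \<in> assignments G g) \<and>
            (xs \<in> assignments G f \<longrightarrow> pot G f xs = pot G g (permute_list p xs))"
    using assms(1) unfolding identical_pot_def by blast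
  obtain q where len': "length (args G k) = length (args G g)"
    and q: "q permutes {..<length (args G g)}"
    and H': "\<forall>xs. length xs = length (args G g) \<longrightarrow>
            (xs \<in> assignments G g \<longleftrightarrow> permute_list q xs \<in> assignments G k) \<and>
            (xs \<in> assignments G g \<longrightarrow> pot G g xs = pot G k (permute_list q xs))"
    using assms(2) unfolding identical_pot_def by blast
  have comp: "permute_list (p \<circ> q) xs = permute_list q (permute_list p xs)"
    if "length xs = length (args G f)" for xs
    using permute_list_compose[of q xs p] q len that by simp
  show ?thesis unfolding identical_pot_def
  proof (intro conjI exI[of _ "p \<circ> q"] allI impI)
    show "length (args G k) = length (args G f)" using len len' by simp
    show "p \<circ> q permutes {..<length (args G f)}" using permutes_compose[of q _ p] p q len by simp
    fix xs :: "'d list" assume lx: "length xs = length (args G f)"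
    have lpx: "length (permute_list p xs) = length (args G g)" using lx len by simp
    show "(xs \<in> assignments G f) = (permute_list (p \<circ> q) xs \<in> assignments G k)"
      using H H' lx lpx comp[OF lx] by metis
    assume "xs \<in> assignments G f"
    then show "pot G f xs = pot G k (permute_list (p \<circ> q) xs)"
      using H H' lx lpx comp[OF lx] by metis
  qed
qed

lemma indist_sym:
  assumes "indist G f g"
  shows "indist G g f"
proof -
  obtain \<tau> where card: "card (fnbrs G f) = card (fnbrs G g)"
    and \<tau>: "bij_betw \<tau> (fnbrs G f) (fnbrs G g)"
    and P: "\<forall>R\<in>fnbrs G f. ev G (\<tau> R) = ev G R \<and> rng G (\<tau> R) = rng G R \<and>
                          card (vnbrs G (\<tau> R)) = card (vnbrs G R)"
    using assms unfolding indist_def by blast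
  let ?\<sigma> = "the_inv_into (fnbrs G f) \<tau>"
  have \<sigma>: "bij_betw ?\<sigma> (fnbrs G g) (fnbrs G f)" using \<tau> by (rule bij_betw_the_inv_into)
  have "ev G (?\<sigma> R) = ev G R \<and> rng G (?\<sigma> R) = rng G R \<and> card (vnbrs G (?\<sigma> R)) = card (vnbrs G R)"
    if R: "R \<in> fnbrs G g" for R
  proof -
    have "?\<sigma> R \<in> fnbrs G f" using \<sigma> R bij_betwE by blast
    moreover have "\<tau> (?\<sigma> R) = R" using \<tau> R f_the_inv_into_f_bij_betw by metis
    ultimately show ?thesis using P by metis
  qed
  then show ?thesis unfolding indist_def using card \<sigma> by metis
qed

lemma indist_trans:
  assumes "indist G f g" and "indist G g k"
  shows "indist G f k"
proof -
  obtain \<tau> where card: "card (fnbrs G f) = card (fnbrs G g)"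
    and \<tau>: "bij_betw \<tau> (fnbrs G f) (fnbrs G g)"
    and P: "\<forall>R\<in>fnbrs G f. ev G (\<tau> R) = ev G R \<and> rng G (\<tau> R) = rng G R \<and>
                          card (vnbrs G (\<tau> R)) = card (vnbrs G R)"
    using assms(1) unfolding indist_def by blast
  obtain \<sigma> where card': "card (fnbrs G g) = card (fnbrs G k)"
    and \<sigma>: "bij_betw \<sigma> (fnbrs G g) (fnbrs G k)"
    and P': "\<forall>R\<in>fnbrs G g. ev G (\<sigma> R) = ev G R \<and> rng G (\<sigma> R) = rng G R \<and>
                           card (vnbrs G (\<sigma> R)) = card (vnbrs G R)"
    using assms(2) unfolding indist_def by blast
  have "\<tau> R \<in> fnbrs G g" if "R \<in> fnbrs G f" for R using \<tau> that bij_betwE by blast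
  then have "\<forall>R\<in>fnbrs G f. ev G ((\<sigma> \<circ> \<tau>) R) = ev G R \<and> rng G ((\<sigma> \<circ> \<tau>) R) = rng G R \<and>
                          card (vnbrs G ((\<sigma> \<circ> \<tau>) R)) = card (vnbrs G R)"
    using P P' by auto
  then show ?thesis
    unfolding indist_def using card card' bij_betw_trans[OF \<tau> \<sigma>] by metis
qed

lemma init_colouring_Min_class:
  fixes G :: "('v, 'd, 'f) fg" and h :: "'f \<Rightarrow> nat"
  assumes h: "inj_on h (factors G)"
    and finite: "finite (known G)" and disjoint: "known G \<inter> unknown G = {}"
  defines "cls f \<equiv> {g \<in> known G. identical_pot G f g}"
  shows "init_colouring G (\<lambda>f. if f \<in> known G then Min (h ` cls f) else h f)"
    (is "init_colouring G ?col")
proof -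
  have Min_cls: "\<exists>a\<in>cls f. ?col f = h a" if "f \<in> known G" for f
  proof -
    have "f \<in> cls f" using that identical_pot_refl[of G f] unfolding cls_def by simp
    then have "Min (h ` cls f) \<in> h ` cls f" using finite unfolding cls_def by (intro Min_in) auto
    then show ?thesis using that by auto
  qed
  have h_eq: "a = b" if "h a = h b" "a \<in> factors G" "b \<in> factors G" for a b
    using inj_onD[OF h] that .
  show ?thesis unfolding init_colouring_def
  proof (intro conjI ballI impI)
    fix f g assume f: "f \<in> known G" and g: "g \<in> known G"
    show "(?col f = ?col g) = identical_pot G f g"
    proof
      assume fg: "identical_pot G f g"
      have "cls f = cls g"
        using identical_pot_trans[OF identical_pot_sym[OF fg]] identical_pot_trans[OF fg]
        unfolding cls_def by blast
      then show "?col f = ?col g" using f g by simp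
    next
      assume "?col f = ?col g"
      moreover obtain a where "a \<in> cls f" "?col f = h a" using Min_cls[OF f] by blast
      moreover obtain b where "b \<in> cls g" "?col g = h b" using Min_cls[OF g] by blast
      ultimately have "identical_pot G f a" "identical_pot G g a"
        using h_eq[of a b] unfolding cls_def factors_def by auto
      then show "identical_pot G f g" by (rule identical_pot_trans[OF _ identical_pot_sym])
    qed
  next
    fix f g assume f: "f \<in> unknown G" and g: "g \<in> factors G" and "g \<noteq> f"
    have f_fac: "f \<in> factors G" and f_unk: "f \<notin> known G"
      using f disjoint unfolding factors_def by auto
    show "?col g \<noteq> ?col f"
    proof (cases "g \<in> known G")
      case True
      then obtain a where "a \<in> cls g" "?col g = h a" using Min_cls by blast
      then show ?thesis using f_fac f_unk h_eq[of a f] unfolding cls_def factors_def by auto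
    next
      case False
      then show ?thesis using f_fac f_unk h_eq[of g f] g \<open>g \<noteq> f\<close> by auto
    qed
  qed
qed

lemma init_colouring_exists:
  fixes G :: "('v, 'd, 'f) fg"
  assumes "wf_fg G"
  shows "\<exists>col. init_colouring G col"
proof -
  have "finite (factors G)" using assms unfolding wf_fg_def factors_def by simp
  then obtain h :: "'f \<Rightarrow> nat" where "inj_on h (factors G)"
    using finite_imp_inj_to_nat_seg by blast
  then show ?thesis using init_colouring_Min_class assms unfolding wf_fg_def by blast
qed

lemma maximal_pi_subset_exists:
  assumes "finite C"
  shows "\<exists>L. maximal_pi_subset G C L"
proof -
  define S where "S = {L. L \<subseteq> C \<and> pairwise (poss_ident G) L}"
  have "finite S" using assms unfolding S_def by simp
  moreover have "{} \<in> S" unfolding S_def by simp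
  ultimately obtain L where "L \<in> S" "\<forall>L'\<in>S. L \<subseteq> L' \<longrightarrow> L' = L"
    using finite_has_maximal[of S] by blast
  then show ?thesis unfolding maximal_pi_subset_def S_def by blast
qed

lemma maximal_pi_subset_nonempty:
  assumes "maximal_pi_subset G C L" and "C \<noteq> {}"
  shows "L \<noteq> {}"
proof
  assume "L = {}"
  moreover obtain g where "g \<in> C" using assms(2) by blast
  ultimately have "{g} = L"
    using assms(1) unfolding maximal_pi_subset_def by (metis empty_subsetI insert_subset pairwise_singleton)
  then show False using \<open>L = {}\<close> by simp
qed

lemma lifg_run_exists:
  assumes "wf_fg G"
  shows "\<exists>col pot'. lifg_run G \<theta> col pot'"
proof -
  obtain us where us: "distinct us" "set us = unknown G"
    using finite_distinct_list assms unfolding wf_fg_def by metis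
  obtain col0 where col0: "init_colouring G col0" using init_colouring_exists[OF assms] by blast
  have "finite (cand G f)" for f
    using assms unfolding wf_fg_def cand_def by simp
  then have "\<forall>f. \<exists>L. maximal_pi_subset G (cand G f) L"
    using maximal_pi_subset_exists by blast
  then obtain L where L: "\<forall>f. maximal_pi_subset G (cand G f) (L f)" by metis
  define src where "src f = (SOME x. x \<in> L f)" for f
  have "\<forall>f\<in>unknown G. L f \<noteq> {} \<longrightarrow> src f \<in> L f" unfolding src_def by (simp add: some_in_eq)
  then show ?thesis
    unfolding lifg_run_def using us col0 L by (metis prod.collapse)
qed

lemma fold_step3_unchanged:
  "(\<forall>y\<in>set ys. \<not> (g \<in> unknown G \<and> g \<noteq> y \<and> poss_ident G y g)) \<Longrightarrow>
   fold (step3 G) ys col g = col g"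
  by (induction ys arbitrary: col) (auto simp: step3_def)

lemma fold_step3_indist_eq:
  assumes U: "set us \<subseteq> unknown G" and f: "f \<in> set us" and f': "f' \<in> set us"
    and ff': "indist G f f'"
  shows "fold (step3 G) us col f = fold (step3 G) us col f'"
proof -
  have "\<exists>y\<in>set us. indist G y f" using f' indist_sym[OF ff'] by blast
  then obtain xs u zs where us: "us = xs @ u # zs" and uf: "indist G u f"
    and later: "\<forall>z\<in>set zs. \<not> indist G z f"
    using split_list_last_prop[of us "\<lambda>y. indist G y f"] by blast
  have uf': "indist G u f'" using indist_trans[OF uf ff'] .
  have later': "\<forall>z\<in>set zs. \<not> indist G z f'"
    using later ff' indist_sym indist_trans by metis
  define col_u where "col_u = step3 G u (fold (step3 G) xs col)"
  have "u \<in> unknown G" "f \<in> unknown G" "f' \<in> unknown G" using U us f f' by auto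
  then have "col_u f = col_u f'"
    using uf uf' unfolding col_u_def step3_def poss_ident_def by auto
  moreover have "fold (step3 G) zs col_u f = col_u f" "fold (step3 G) zs col_u f' = col_u f'"
    using later later' by (auto intro!: fold_step3_unchanged simp: poss_ident_def)
  ultimately show ?thesis unfolding us col_u_def by simp
qed

lemma step4_zero_threshold:
  "cand G f \<noteq> {} \<Longrightarrow> step4 G 0 L src f st =
     ((\<lambda>g. if g \<in> L f then fst st f else fst st g), (snd st)(f := pot G (src f)))"
  unfolding step4_def by simp

lemma fold_step4_col_unchanged:
  "\<forall>y\<in>set ys. g \<notin> L y \<Longrightarrow> fst (fold (step4 G \<theta> L src) ys st) g = fst st g"
  by (induction ys arbitrary: st) (auto simp: step4_def)

lemma fold_step4_pot_unchanged:
  "f \<notin> set ys \<Longrightarrow> snd (fold (step4 G \<theta> L src) ys st) f = snd st f"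
  by (induction ys arbitrary: st) (auto simp: step4_def)

lemma fold_step4_pot_assigned:
  assumes "distinct us" and "f \<in> set us" and "cand G f \<noteq> {}"
  shows "snd (fold (step4 G 0 L src) us st) f = pot G (src f)"
proof -
  obtain xs ys where us: "us = xs @ f # ys" using assms(2) split_list by metis
  then have "f \<notin> set ys" using assms(1) by simp
  then show ?thesis
    unfolding us by (simp add: fold_step4_pot_unchanged step4_zero_threshold[OF assms(3)])
qed

lemma fold_step4_col_recoloured:
  assumes "\<forall>y\<in>set us. \<forall>u\<in>set us. u \<notin> L y" and "\<forall>u\<in>set us. cand G u \<noteq> {}"
    and "\<exists>u\<in>set us. g \<in> L u"
  shows "\<exists>u\<in>set us. g \<in> L u \<and> fst (fold (step4 G 0 L src) us st) g = fst st u"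
  using assms
proof (induction us rule: rev_induct)
  case Nil
  then show ?case by simp
next
  case (snoc x xs)
  show ?case
  proof (cases "g \<in> L x")
    case True
    have "fst (fold (step4 G 0 L src) xs st) x = fst st x"
      using snoc.prems(1) by (intro fold_step4_col_unchanged) auto
    then show ?thesis using True snoc.prems(2) by (auto simp: step4_zero_threshold)
  next
    case False
    then show ?thesis using snoc by (auto simp: step4_zero_threshold)
  qed
qed

lemma lifg_run_zero_assigns_known:
  assumes disjoint: "known G \<inter> unknown G = {}"
    and covered: "\<forall>fi\<in>unknown G. \<exists>fj\<in>known G. poss_ident G fi fj"
    and run: "lifg_run G 0 col pot'" and f: "f \<in> unknown G"
  shows "\<exists>g\<in>known G. col f = col g \<and> pot' f = pot G g"
proof -
  obtain us col0 L src where us: "distinct us" "set us = unknown G"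
    and L: "\<forall>f\<in>unknown G. maximal_pi_subset G (cand G f) (L f)"
    and src: "\<forall>f\<in>unknown G. L f \<noteq> {} \<longrightarrow> src f \<in> L f"
    and result: "(col, pot') = fold (step4 G 0 L src) us (fold (step3 G) us col0, pot G)"
    using run unfolding lifg_run_def by blast
  define col3 where "col3 = fold (step3 G) us col0"
  have col: "col = fst (fold (step4 G 0 L src) us (col3, pot G))"
    and pot': "pot' = snd (fold (step4 G 0 L src) us (col3, pot G))"
    using result unfolding col3_def by (simp_all add: prod_eq_iff)
  have cand_ne: "cand G u \<noteq> {}" if "u \<in> unknown G" for u
    using covered that disjoint unfolding cand_def by blast
  have L_cand: "L u \<subseteq> cand G u" if "u \<in> unknown G" for u
    using L that unfolding maximal_pi_subset_def by simp
  have src_L: "src u \<in> L u" if "u \<in> unknown G" for u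
    using src L cand_ne that maximal_pi_subset_nonempty by blast
  have indist_src: "indist G u g" if "u \<in> unknown G" "g \<in> L u" for u g
    using L_cand that unfolding cand_def poss_ident_def by blast
  have L_known: "\<forall>y\<in>set us. \<forall>u\<in>set us. u \<notin> L y"
    using L_cand disjoint us(2) unfolding cand_def by blast
  have "\<exists>u\<in>set us. src f \<in> L u \<and> col (src f) = col3 u"
    unfolding col
    using fold_step4_col_recoloured[OF L_known,
        where G = G and src = src and g = "src f" and st = "(col3, pot G)"]
      cand_ne src_L f us(2) by auto
  then obtain u where u: "u \<in> unknown G" "src f \<in> L u" and col_src: "col (src f) = col3 u"
    using us(2) by blast
  have f_us: "f \<in> set us" and u_us: "u \<in> set us" using f u us(2) by auto
  have "\<forall>y\<in>set us. f \<notin> L y" using L_known f_us by blast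
  then have "col f = col3 f" unfolding col by (simp add: fold_step4_col_unchanged)
  moreover have "col3 f = col3 u"
  proof -
    have "indist G f u"
      using indist_trans[OF indist_src[OF f src_L[OF f]] indist_sym[OF indist_src[OF u]]] .
    from fold_step3_indist_eq[OF _ f_us u_us this] show ?thesis
      unfolding col3_def by (simp add: us(2))
  qed
  moreover have "pot' f = pot G (src f)"
    unfolding pot' by (rule fold_step4_pot_assigned[OF us(1) f_us cand_ne[OF f]])
  moreover have "src f \<in> known G" using L_cand[OF f] src_L[OF f] by (auto simp: cand_def)
  ultimately show ?thesis using col_src by (intro bexI[of _ "src f"]) auto
qed

theorem mainTheorem1:
  fixes G :: "('v, 'd, 'f) fg"
  assumes "wf_fg G"
    and "\<forall>fi\<in>unknown G. \<exists>fj\<in>known G. poss_ident G fi fj"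
  shows "\<exists>\<theta>::real. 0 \<le> \<theta> \<and> \<theta> \<le> 1 \<and> (\<exists>col pot'. lifg_run G \<theta> col pot') \<and>
           (\<forall>col pot'. lifg_run G \<theta> col pot' \<longrightarrow>
              (\<forall>f\<in>unknown G. \<exists>g\<in>known G. col f = col g \<and> pot' f = pot G g))"
proof -
  have "known G \<inter> unknown G = {}" using assms(1) unfolding wf_fg_def by blast
  note assigns_known = lifg_run_zero_assigns_known[OF this assms(2)]
  show ?thesis
    using lifg_run_exists[OF assms(1), of 0] assigns_known by (intro exI[of _ 0]) simp
qed

end
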